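(* For every target rate $r>0$, $P_{\rm r}>0$ and $\mathcal C_x\in[0,1)$, writing $\beta=\frac{\Psi_r(\mathcal C_x)}{P_{\rm r}\theta_{\rm rd}(1-\mathcal C_x^2)}$, \[ \mathcal P_{\rm E-E}=1-\frac{e^{-\beta}}{\Gamma(m_{\rm sd})\Gamma(m_{\rm rr})\Gamma(m_{\rm sr})\theta_{\rm sd}^{m_{\rm sd}}\theta_{\rm rr}^{m_{\rm rr}}}\sum_{m=0}^{m_{\rm rd}-1}\sum_{k=0}^m\binom mk\frac{P_{\rm s}^k\Gamma(k+m_{\rm sd})\beta^m}{\Gamma(m+1)\left(P_{\rm s}\beta+\frac1{\theta_{\rm sd}}\right)^{k+m_{\rm sd}}}\int_0^\infty x^{m_{\rm rr}-1}\Gamma\!\left(m_{\rm sr},\frac{P_{\rm r}x+1}{P_{\rm s}\theta_{\rm sr}}\Psi_r\!\left(\frac{P_{\rm r}x\,\mathcal C_x}{P_{\rm r}x+1}\right)\right)e^{-x/\theta_{\rm rr}}dx . \]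
   Context: Let $P_{\rm s}>0$, $P_{\rm r}>0$ be the source and relay transmit powers. For links $ij\in\{\mathrm{sr},\mathrm{rr},\mathrm{rd},\mathrm{sd}\}$ let $g_{ij}$ be mutually independent random channel gains, $g_{ij}$ gamma distributed with integer shape parameter $m_{ij}\ge1$ and scale $\theta_{ij}=\pi_{ij}/m_{ij}$, where $\pi_{ij}=\mathbb E[g_{ij}]>0$; i.e. $g_{ij}$ has density $x^{m_{ij}-1}e^{-x/\theta_{ij}}/(\Gamma(m_{ij})\theta_{ij}^{m_{ij}})$ for $x\ge0$. For a circularity coefficient $\mathcal C_x\in[0,1)$ define $R_{\rm sr}(P_{\rm r},\mathcal C_x)=\tfrac12\log_2\frac{(P_{\rm s}g_{\rm sr}+P_{\rm r}g_{\rm rr}+1)^2-(P_{\rm r}g_{\rm rr}\mathcal C_x)^2}{(P_{\rm r}g_{\rm rr}+1)^2-(P_{\rm r}g_{\rm rr}\mathcal C_x)^2}$ and $R_{\rm rd}(P_{\rm r},\mathcal C_x)=\tfrac12\log_2\frac{(P_{\rm r}g_{\rm rd}+P_{\rm s}g_{\rm sd}+1)^2-(P_{\rm r}g_{\rm rd}\mathcal C_x)^2}{(P_{\rm s}g_{\rm sd}+1)^2}$. For a target rate $r>0$ put $\gamma=2^{2r}-1$, $\eta=2^r-1$ and $\Psi_r(x)=\sqrt{1+\gamma(1-x^2)}-1$. The outage probabilities are $\mathcal P_{\rm sr}=\mathbb P\{R_{\rm sr}<r\}$, $\mathcal P_{\rm rd}=\mathbb P\{R_{\rm rd}<r\}$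 and $\mathcal P_{\rm E-E}=\mathbb P\{\min(R_{\rm sr},R_{\rm rd})<r\}$. $\Gamma(a,x)=\int_x^\infty t^{a-1}e^{-t}dt$ is the upper incomplete gamma function. *)

theory Defs
  imports "HOL-Probability.Probability"
begin

definition gamma_density :: "nat \<Rightarrow> real \<Rightarrow> real \<Rightarrow> real" where
  "gamma_density m \<theta> x =
     (if x \<ge> 0 then x ^ (m - 1) * exp (- x / \<theta>) / (Gamma (real m) * \<theta> ^ m) else 0)"

definition upper_inc_gamma :: "nat \<Rightarrow> real \<Rightarrow> real" where
  "upper_inc_gamma a x = (LBINT t:{x..}. t ^ (a - 1) * exp (- t))"

definition Psi :: "real \<Rightarrow> real \<Rightarrow> real" where
  "Psi r x = sqrt (1 + (2 powr (2 * r) - 1) * (1 - x\<^sup>2)) - 1"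

definition R_sr :: "real \<Rightarrow> real \<Rightarrow> real \<Rightarrow> real \<Rightarrow> real \<Rightarrow> real" where
  "R_sr Ps Pr C gsr grr =
     1/2 * log 2 (((Ps * gsr + Pr * grr + 1)\<^sup>2 - (Pr * grr * C)\<^sup>2) /
                  ((Pr * grr + 1)\<^sup>2 - (Pr * grr * C)\<^sup>2))"

definition R_rd :: "real \<Rightarrow> real \<Rightarrow> real \<Rightarrow> real \<Rightarrow> real \<Rightarrow> real" where
  "R_rd Ps Pr C grd gsd =
     1/2 * log 2 (((Pr * grd + Ps * gsd + 1)\<^sup>2 - (Pr * grd * C)\<^sup>2) / (Ps * gsd + 1)\<^sup>2)"

end

theory Submission
  imports Defs
begin

text \<open>
  The end-to-end link works iff both hops do, and the two events depend on the disjoint,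
  independent pairs (g_sr, g_rr) and (g_rd, g_sd); hence the outage probability is
  1 - P(R_sr \<ge> r) P(R_rd \<ge> r). Solving the quadratic inequalities hidden in the rate
  expressions turns each event into a threshold event g_sr \<ge> sr_threshold(g_rr), resp.
  g_rd \<ge> rd_threshold(g_sd). For integer shape m the gamma tail is the Erlang survival function
  e^-u \<Sum>n<m. u^n/n! = \<Gamma>(m,u)/\<Gamma>(m); averaging it over g_rr gives the integral factor.
  The second threshold is affine in g_sd, so expanding (P_s \<beta> g_sd + \<beta>)^n binomially reduces
  the average to the gamma moments E[g_sd^k e^(-P_s \<beta> g_sd)], which give the double sum.
\<close>

section \<open>The Erlang survival function\<close>

definition erlang_survival :: "nat \<Rightarrow> real \<Rightarrow> real \<Rightarrow> real" where
  "erlang_survival k l a = exp (- l * a) * (\<Sum>n\<le>k. (l * a) ^ n / fact n)"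

lemma erlang_survival_nonneg: "0 \<le> l \<Longrightarrow> 0 \<le> a \<Longrightarrow> 0 \<le> erlang_survival k l a"
  by (simp add: erlang_survival_def sum_nonneg)

lemma erlang_survival_rate: "erlang_survival k l a = erlang_survival k 1 (l * a)"
  by (simp add: erlang_survival_def)

lemma erlang_survival_eq_1_minus_CDF:
  "0 \<le> a \<Longrightarrow> erlang_survival k l a = 1 - erlang_CDF k l a"
  by (simp add: erlang_survival_def erlang_CDF_def sum_distrib_left mult.commute)

lemma nn_integral_erlang_density_atLeast:
  assumes l: "0 < l" and a: "0 \<le> a"
  shows "(\<integral>\<^sup>+x. ennreal (erlang_density k l x) * indicator {a..} x \<partial>lborel) = erlang_survival k l a"
proof -
  let ?D = "density lborel (erlang_density k l)"
  interpret D: prob_space ?D using prob_space_erlang_density[OF l] .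
  have "(\<integral>\<^sup>+x. ennreal (erlang_density k l x) * indicator {a..} x \<partial>lborel)
      = (\<integral>\<^sup>+x. ennreal (erlang_density k l x) * indicator (UNIV - {..a}) x \<partial>lborel)"
    by (rule nn_integral_cong_AE)
       (use AE_lborel_singleton[of a] in \<open>auto elim!: eventually_mono split: split_indicator\<close>)
  also have "\<dots> = emeasure ?D (space ?D - {..a})"
    by (simp add: emeasure_density)
  also have "\<dots> = emeasure ?D (space ?D) - emeasure ?D {..a}"
    by (rule emeasure_compl) auto
  also have "\<dots> = ennreal (1 - erlang_CDF k l a)"
    using emeasure_erlang_density[OF l, of k a] D.emeasure_space_1
    by (simp del: emeasure_density) (metis ennreal_1 ennreal_minus erlang_CDF_nonneg[OF l])
  finally show ?thesis
    using a by (simp add: erlang_survival_eq_1_minus_CDF)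
qed

lemma upper_inc_gamma_eq_erlang_survival:
  assumes "0 \<le> u"
  shows "upper_inc_gamma a u = fact (a - 1) * erlang_survival (a - 1) 1 u"
proof -
  have "upper_inc_gamma a u = (LBINT t:{u..}. fact (a - 1) * erlang_density (a - 1) 1 t)"
    unfolding upper_inc_gamma_def
    by (intro set_lebesgue_integral_cong) (use assms in \<open>auto simp: erlang_density_def\<close>)
  also have "\<dots> = fact (a - 1) * (LBINT t:{u..}. erlang_density (a - 1) 1 t)"
    by (rule set_integral_mult_right)
  also have "(LBINT t:{u..}. erlang_density (a - 1) 1 t)
      = enn2real (\<integral>\<^sup>+t. ennreal (erlang_density (a - 1) 1 t) * indicator {u..} t \<partial>lborel)"
    unfolding set_lebesgue_integral_def
    by (subst integral_eq_nn_integral)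
       (auto intro!: arg_cong[where f = enn2real] nn_integral_cong split: split_indicator)
  also have "\<dots> = erlang_survival (a - 1) 1 u"
    using assms by (simp add: nn_integral_erlang_density_atLeast erlang_survival_nonneg)
  finally show ?thesis .
qed

lemma nn_integral_erlang_density_exp_power:
  assumes l: "0 < l" and s: "0 \<le> s"
  shows "(\<integral>\<^sup>+y. ennreal (erlang_density k l y * exp (- s * y) * y ^ i) \<partial>lborel)
       = ennreal (l ^ Suc k * fact (k + i) / (fact k * (l + s) ^ (Suc k + i)))"
proof -
  have ls: "0 < l + s" using l s by simp
  have tilt: "erlang_density k l y * exp (- s * y) = (l / (l + s)) ^ Suc k * erlang_density k (l + s) y" for y
  proof (cases "y < 0")
    case False
    have e: "exp (- l * y) * exp (- s * y) = exp (- (l + s) * y)"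
      by (simp add: exp_add[symmetric] algebra_simps)
    have p: "l ^ Suc k = (l / (l + s)) ^ Suc k * (l + s) ^ Suc k"
      using ls by (simp add: power_divide)
    have "erlang_density k l y * exp (- s * y) = l ^ Suc k * y ^ k * (exp (- l * y) * exp (- s * y)) / fact k"
      using False by (simp add: erlang_density_def)
    also have "\<dots> = (l / (l + s)) ^ Suc k * ((l + s) ^ Suc k * y ^ k * exp (- (l + s) * y) / fact k)"
      by (simp only: e p mult.assoc times_divide_eq_right)
    also have "\<dots> = (l / (l + s)) ^ Suc k * erlang_density k (l + s) y"
      using False by (simp add: erlang_density_def)
    finally show ?thesis .
  qed (simp add: erlang_density_def)
  have eq: "erlang_density k l y * exp (- s * y) * y ^ i
      = (l / (l + s)) ^ Suc k * (erlang_density k (l + s) y * y ^ i)" for y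
    by (simp only: tilt mult.assoc)
  have "(\<integral>\<^sup>+y. ennreal (erlang_density k l y * exp (- s * y) * y ^ i) \<partial>lborel)
      = (\<integral>\<^sup>+y. ennreal ((l / (l + s)) ^ Suc k) * ennreal (erlang_density k (l + s) y * y ^ i) \<partial>lborel)"
    unfolding eq using l ls by (intro nn_integral_cong ennreal_mult') simp
  also have "\<dots> = ennreal ((l / (l + s)) ^ Suc k) * (\<integral>\<^sup>+y. ennreal (erlang_density k (l + s) y * y ^ i) \<partial>lborel)"
    by (rule nn_integral_cmult) auto
  also have "\<dots> = ennreal ((l / (l + s)) ^ Suc k * (fact (k + i) / (fact k * (l + s) ^ i)))"
    using l ls by (simp only: nn_integral_erlang_ith_moment ennreal_mult'[symmetric]
        zero_le_power divide_nonneg_nonneg less_imp_le)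
  also have "(l / (l + s)) ^ Suc k * (fact (k + i) / (fact k * (l + s) ^ i))
      = l ^ Suc k * fact (k + i) / (fact k * (l + s) ^ (Suc k + i))"
    by (simp add: power_add power_divide)
  finally show ?thesis .
qed

lemma Gamma_of_nat_eq_fact: "1 \<le> m \<Longrightarrow> Gamma (real m) = fact (m - 1)"
  using Gamma_fact[of "m - 1"] by (simp add: of_nat_diff)

lemma gamma_density_eq_erlang_density:
  assumes "1 \<le> m" "0 < \<theta>"
  shows "gamma_density m \<theta> = erlang_density (m - 1) (1 / \<theta>)"
proof
  fix x
  have "Suc (m - 1) = m" using assms by simp
  then show "gamma_density m \<theta> x = erlang_density (m - 1) (1 / \<theta>) x"
    using assms by (simp add: gamma_density_def erlang_density_def Gamma_of_nat_eq_fact power_one_over)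
qed

lemma gamma_density_nonneg: "1 \<le> m \<Longrightarrow> 0 < \<theta> \<Longrightarrow> 0 \<le> gamma_density m \<theta> x"
  by (simp add: gamma_density_eq_erlang_density)


section \<open>Rate thresholds\<close>

lemma Psi_nonneg:
  assumes "0 < r" "\<bar>v\<bar> \<le> 1"
  shows "0 \<le> Psi r v"
proof -
  have "v\<^sup>2 \<le> 1" using assms(2) by (simp add: abs_le_square_iff power_le_one_iff abs_square_le_1)
  moreover have "0 < (2::real) powr (2 * r) - 1" using assms(1) by simp
  ultimately show ?thesis unfolding Psi_def by simp
qed

lemma half_log2_ge_iff:
  fixes N D r :: real
  assumes "0 < D" "0 < N"
  shows "r \<le> 1/2 * log 2 (N / D) \<longleftrightarrow> 2 powr (2 * r) * D \<le> N"
proof -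
  have "r \<le> 1/2 * log 2 (N / D) \<longleftrightarrow> 2 powr (2 * r) \<le> N / D"
    using assms by (subst le_log_iff[symmetric]) auto
  also have "\<dots> \<longleftrightarrow> 2 powr (2 * r) * D \<le> N"
    using assms(1) by (rule pos_le_divide_eq)
  finally show ?thesis .
qed

lemma sqrt_le_iff_le_square:
  fixes A v :: real
  assumes "0 \<le> v"
  shows "sqrt A \<le> v \<longleftrightarrow> A \<le> v\<^sup>2"
  using assms real_le_lsqrt sqrt_le_D by blast

definition sr_threshold :: "real \<Rightarrow> real \<Rightarrow> real \<Rightarrow> real \<Rightarrow> real \<Rightarrow> real" where
  "sr_threshold Ps Pr C r y = (Pr * y + 1) * Psi r (Pr * y * C / (Pr * y + 1)) / Ps"

definition rd_threshold :: "real \<Rightarrow> real \<Rightarrow> real \<Rightarrow> real \<Rightarrow> real \<Rightarrow> real" where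
  "rd_threshold Ps Pr C r y = (Ps * y + 1) * Psi r C / (Pr * (1 - C\<^sup>2))"

lemma sr_threshold_nonneg:
  assumes Ps: "0 < Ps" and Pr: "0 < Pr" and r: "0 < r" and C: "0 \<le> C" "C \<le> 1" and y: "0 \<le> y"
  shows "0 \<le> sr_threshold Ps Pr C r y"
proof -
  have "Pr * y * C \<le> Pr * y + 1" using Pr C y by (simp add: mult_left_le add_increasing2)
  then have "\<bar>Pr * y * C / (Pr * y + 1)\<bar> \<le> 1"
    using Pr C y by (simp add: abs_le_iff divide_le_eq_1 add_nonneg_pos)
  then show ?thesis unfolding sr_threshold_def using Psi_nonneg[OF r] Pr Ps y by simp
qed

lemma rd_threshold_nonneg:
  assumes "0 \<le> Ps" "0 \<le> Pr" "0 < r" "\<bar>C\<bar> \<le> 1" "0 \<le> y"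
  shows "0 \<le> rd_threshold Ps Pr C r y"
  using assms Psi_nonneg[of r C] by (simp add: rd_threshold_def abs_square_le_1)

lemma R_sr_ge_iff:
  assumes Ps: "0 < Ps" and Pr: "0 < Pr" and r: "0 < r" and C: "0 \<le> C" "C \<le> 1"
    and x: "0 \<le> x" and y: "0 \<le> y"
  shows "r \<le> R_sr Ps Pr C x y \<longleftrightarrow> sr_threshold Ps Pr C r y \<le> x"
proof -
  define b where "b = Pr * y + 1"
  define c where "c = Pr * y * C"
  define \<gamma> where "\<gamma> = (2::real) powr (2 * r) - 1"
  have b: "0 < b" unfolding b_def using Pr y by (simp add: add_nonneg_pos)
  have c: "0 \<le> c" "c \<le> Pr * y" unfolding c_def using Pr y C by (simp_all add: mult_left_le)
  then have cb: "c\<^sup>2 < b\<^sup>2" unfolding b_def by (intro power_strict_mono) auto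
  have "b\<^sup>2 \<le> (Ps * x + b)\<^sup>2" using b Ps x by (intro power_mono) auto
  then have num: "0 < (Ps * x + b)\<^sup>2 - c\<^sup>2" using cb by linarith
  have root: "b * Psi r (c / b) = sqrt (b\<^sup>2 + \<gamma> * (b\<^sup>2 - c\<^sup>2)) - b"
  proof -
    have "b * sqrt (1 + \<gamma> * (1 - (c / b)\<^sup>2)) = sqrt (b\<^sup>2 * (1 + \<gamma> * (1 - (c / b)\<^sup>2)))"
      using b by (simp add: real_sqrt_mult)
    also have "b\<^sup>2 * (1 + \<gamma> * (1 - (c / b)\<^sup>2)) = b\<^sup>2 + \<gamma> * (b\<^sup>2 - c\<^sup>2)"
      using b by (simp add: field_simps power2_eq_square)
    finally show ?thesis unfolding Psi_def \<gamma>_def by (simp add: algebra_simps)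
  qed
  have "r \<le> R_sr Ps Pr C x y \<longleftrightarrow> (1 + \<gamma>) * (b\<^sup>2 - c\<^sup>2) \<le> (Ps * x + b)\<^sup>2 - c\<^sup>2"
    unfolding R_sr_def using half_log2_ge_iff[of "b\<^sup>2 - c\<^sup>2" "(Ps * x + b)\<^sup>2 - c\<^sup>2" r] cb num
    by (simp add: b_def c_def \<gamma>_def add.assoc)
  also have "\<dots> \<longleftrightarrow> sqrt (b\<^sup>2 + \<gamma> * (b\<^sup>2 - c\<^sup>2)) \<le> Ps * x + b"
    using b Ps x by (subst sqrt_le_iff_le_square) (auto simp: algebra_simps)
  also have "\<dots> \<longleftrightarrow> b * Psi r (c / b) / Ps \<le> x"
    using Ps by (simp add: root pos_divide_le_eq algebra_simps)
  finally show ?thesis by (simp add: sr_threshold_def b_def c_def)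
qed

lemma R_rd_ge_iff:
  assumes Ps: "0 < Ps" and Pr: "0 < Pr" and r: "0 < r" and C: "0 \<le> C" "C < 1"
    and x: "0 \<le> x" and y: "0 \<le> y"
  shows "r \<le> R_rd Ps Pr C x y \<longleftrightarrow> rd_threshold Ps Pr C r y \<le> x"
proof -
  define a where "a = Ps * y + 1"
  define Y where "Y = Pr * x"
  define D where "D = 1 - C\<^sup>2"
  define \<gamma> where "\<gamma> = (2::real) powr (2 * r) - 1"
  have a: "0 < a" unfolding a_def using Ps y by (simp add: add_nonneg_pos)
  have Y: "0 \<le> Y" unfolding Y_def using Pr x by simp
  have D: "0 < D" unfolding D_def using C by (simp add: abs_square_less_1)
  have \<gamma>: "0 < \<gamma>" unfolding \<gamma>_def using r by simp
  have "(Y * C)\<^sup>2 \<le> Y\<^sup>2"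
    using C Y by (simp add: power_mult_distrib mult_left_le power_le_one)
  moreover have "Y\<^sup>2 < (Y + a)\<^sup>2"
    using a Y by (intro power_strict_mono) auto
  ultimately have num: "0 < (Y + a)\<^sup>2 - (Y * C)\<^sup>2" by linarith
  have square: "D * ((Y + a)\<^sup>2 - (Y * C)\<^sup>2 - (1 + \<gamma>) * a\<^sup>2) = (D * Y + a)\<^sup>2 - (a * sqrt (1 + \<gamma> * D))\<^sup>2"
  proof -
    have "(a * sqrt (1 + \<gamma> * D))\<^sup>2 = a\<^sup>2 * (1 + \<gamma> * D)"
      using D \<gamma> by (simp add: power_mult_distrib)
    then show ?thesis by (simp add: D_def power2_eq_square algebra_simps)
  qed
  have "r \<le> R_rd Ps Pr C x y \<longleftrightarrow> (1 + \<gamma>) * a\<^sup>2 \<le> (Y + a)\<^sup>2 - (Y * C)\<^sup>2"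
    unfolding R_rd_def using half_log2_ge_iff[of "a\<^sup>2" "(Y + a)\<^sup>2 - (Y * C)\<^sup>2" r] a num
    by (simp add: a_def Y_def \<gamma>_def add.assoc add.left_commute)
  also have "\<dots> \<longleftrightarrow> 0 \<le> D * ((Y + a)\<^sup>2 - (Y * C)\<^sup>2 - (1 + \<gamma>) * a\<^sup>2)"
    using D by (simp add: zero_le_mult_iff)
  also have "\<dots> \<longleftrightarrow> (a * sqrt (1 + \<gamma> * D))\<^sup>2 \<le> (D * Y + a)\<^sup>2"
    unfolding square by simp
  also have "\<dots> \<longleftrightarrow> a * sqrt (1 + \<gamma> * D) \<le> D * Y + a"
    using a D Y \<gamma> by (intro power2_le_iff_abs_le[THEN trans]) auto
  also have "\<dots> \<longleftrightarrow> a * Psi r C \<le> Y * D"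
    by (simp add: Psi_def \<gamma>_def D_def algebra_simps)
  also have "\<dots> \<longleftrightarrow> rd_threshold Ps Pr C r y \<le> x"
    using Pr D by (simp add: rd_threshold_def a_def Y_def D_def pos_divide_le_eq mult_ac)
  finally show ?thesis .
qed

lemma borel_measurable_R_sr [measurable]:
  "(\<lambda>(x, y). R_sr Ps Pr C x y) \<in> borel_measurable (lborel \<Otimes>\<^sub>M lborel)"
  unfolding R_sr_def by measurable

lemma borel_measurable_R_rd [measurable]:
  "(\<lambda>(x, y). R_rd Ps Pr C x y) \<in> borel_measurable (lborel \<Otimes>\<^sub>M lborel)"
  unfolding R_rd_def by measurable

lemma sets_pair_lborel_le:
  fixes f :: "real \<Rightarrow> real \<Rightarrow> real"
  assumes "(\<lambda>(x, y). f x y) \<in> borel_measurable (lborel \<Otimes>\<^sub>M lborel)"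
  shows "{(x, y). r \<le> f x y} \<in> sets (lborel \<Otimes>\<^sub>M lborel)"
proof -
  have "{(x, y). r \<le> f x y} = {p \<in> space (lborel \<Otimes>\<^sub>M lborel). r \<le> (\<lambda>(x, y). f x y) p}"
    by (auto simp: space_pair_measure)
  also have "\<dots> \<in> sets (lborel \<Otimes>\<^sub>M lborel)"
    using assms by measurable
  finally show ?thesis .
qed


section \<open>Independent pairs of random variables\<close>

lemma (in prob_space) indep_var_restrict_compose:
  assumes "indep_vars M' X I" "A \<inter> B = {}" "A \<subseteq> I" "B \<subseteq> I"
    and "F \<in> measurable (PiM A M') N" "G \<in> measurable (PiM B M') N'"
  shows "indep_var N (\<lambda>\<omega>. F (restrict (\<lambda>i. X i \<omega>) A)) N' (\<lambda>\<omega>. G (restrict (\<lambda>i. X i \<omega>) B))"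
  using indep_var_compose[OF indep_var_restrict[OF assms(1-4)] assms(5,6)] by (simp add: comp_def)

lemma (in prob_space) indep_vars_list4:
  fixes A B C D :: "'a \<Rightarrow> real"
  assumes ind: "indep_vars (\<lambda>_. borel) (\<lambda>i. [A, B, C, D] ! i) {0..<4}"
  shows "indep_var (lborel \<Otimes>\<^sub>M lborel) (\<lambda>\<omega>. (A \<omega>, B \<omega>)) (lborel \<Otimes>\<^sub>M lborel) (\<lambda>\<omega>. (C \<omega>, D \<omega>))"
    and "indep_var lborel A lborel B"
    and "indep_var lborel C lborel D"
proof -
  have pair: "(\<lambda>f::nat \<Rightarrow> real. (f i, f j)) \<in> measurable (PiM {i, j} (\<lambda>_. borel)) (lborel \<Otimes>\<^sub>M lborel)"
    for i j by measurable
  have single: "(\<lambda>f::nat \<Rightarrow> real. f i) \<in> measurable (PiM {i} (\<lambda>_. borel)) lborel" for i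
    by measurable
  from indep_var_restrict_compose[OF ind _ _ _ pair pair, of 0 1 2 3]
  show "indep_var (lborel \<Otimes>\<^sub>M lborel) (\<lambda>\<omega>. (A \<omega>, B \<omega>)) (lborel \<Otimes>\<^sub>M lborel) (\<lambda>\<omega>. (C \<omega>, D \<omega>))"
    by simp
  from indep_var_restrict_compose[OF ind _ _ _ single single, of 0 1]
  show "indep_var lborel A lborel B" by simp
  from indep_var_restrict_compose[OF ind _ _ _ single single, of 2 3]
  show "indep_var lborel C lborel D" by simp
qed

lemma (in prob_space) prob_min_lt_indep:
  fixes f g :: "'x \<Rightarrow> real"
  assumes ind: "indep_var N X N' Y"
    and f: "f \<in> borel_measurable N" and g: "g \<in> borel_measurable N'"
  shows "prob {\<omega> \<in> space M. min (f (X \<omega>)) (g (Y \<omega>)) < r}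
       = 1 - prob {\<omega> \<in> space M. r \<le> f (X \<omega>)} * prob {\<omega> \<in> space M. r \<le> g (Y \<omega>)}"
proof -
  have X: "random_variable N X" and Y: "random_variable N' Y"
    using indep_var_rv1[OF ind] indep_var_rv2[OF ind] .
  define A where "A = {x \<in> space N. r \<le> f x}"
  define B where "B = {y \<in> space N'. r \<le> g y}"
  note [measurable] = f g
  have sets: "A \<in> sets N" "B \<in> sets N'"
    unfolding A_def B_def by measurable
  have XA: "X -` A \<inter> space M = {\<omega> \<in> space M. r \<le> f (X \<omega>)}"
    and YB: "Y -` B \<inter> space M = {\<omega> \<in> space M. r \<le> g (Y \<omega>)}"
    using measurable_space[OF X] measurable_space[OF Y] by (auto simp: A_def B_def)
  have "{\<omega> \<in> space M. min (f (X \<omega>)) (g (Y \<omega>)) < r}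
      = space M - (\<lambda>\<omega>. (X \<omega>, Y \<omega>)) -` (A \<times> B) \<inter> space M"
    using measurable_space[OF X] measurable_space[OF Y] by (auto simp: A_def B_def)
  also have "prob \<dots> = 1 - prob ((\<lambda>\<omega>. (X \<omega>, Y \<omega>)) -` (A \<times> B) \<inter> space M)"
    using X Y pair_measureI[OF sets] by (intro prob_compl) measurable
  finally show ?thesis
    using indep_varD[OF ind sets] by (simp add: XA YB)
qed

lemma (in prob_space) emeasure_indep_pair_density:
  assumes X: "distributed M lborel X (\<lambda>x. ennreal (f x))"
    and Y: "distributed M lborel Y (\<lambda>y. ennreal (g y))"
    and ind: "indep_var lborel X lborel Y"
    and S: "S \<in> sets (lborel \<Otimes>\<^sub>M lborel)"
  shows "emeasure M ((\<lambda>\<omega>. (X \<omega>, Y \<omega>)) -` S \<inter> space M)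
       = (\<integral>\<^sup>+y. \<integral>\<^sup>+x. ennreal (f x) * ennreal (g y) * indicator S (x, y) \<partial>lborel \<partial>lborel)"
proof -
  have joint: "distributed M (lborel \<Otimes>\<^sub>M lborel) (\<lambda>\<omega>. (X \<omega>, Y \<omega>))
      (\<lambda>(x, y). ennreal (f x) * ennreal (g y))"
    by (rule distributed_joint_indep[OF _ _ X Y ind]) (auto intro: lborel.sigma_finite_measure_axioms)
  have [measurable]: "(\<lambda>x. ennreal (f x)) \<in> borel_measurable lborel" "(\<lambda>y. ennreal (g y)) \<in> borel_measurable lborel"
    using distributed_borel_measurable[OF X] distributed_borel_measurable[OF Y] by simp_all
  have "emeasure M ((\<lambda>\<omega>. (X \<omega>, Y \<omega>)) -` S \<inter> space M)
      = (\<integral>\<^sup>+z. (case z of (x, y) \<Rightarrow> ennreal (f x) * ennreal (g y)) * indicator S z \<partial>(lborel \<Otimes>\<^sub>M lborel))"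
    by (rule distributed_emeasure[OF joint S])
  also have "\<dots> = (\<integral>\<^sup>+y. \<integral>\<^sup>+x. ennreal (f x) * ennreal (g y) * indicator S (x, y) \<partial>lborel \<partial>lborel)"
    by (subst lborel_pair.nn_integral_snd[symmetric]) (use S in \<open>auto simp: case_prod_beta\<close>)
  finally show ?thesis .
qed

lemma (in prob_space) emeasure_erlang_ge_threshold:
  assumes ind: "indep_var lborel X lborel Y" and l: "0 < l"
    and X: "distributed M lborel X (\<lambda>x. ennreal (erlang_density k l x))"
    and Y: "distributed M lborel Y (\<lambda>y. ennreal (g y))"
    and g_neg: "\<And>y. y < 0 \<Longrightarrow> g y = 0"
    and P: "{(x, y). P x y} \<in> sets (lborel \<Otimes>\<^sub>M lborel)"
    and threshold: "\<And>x y. 0 \<le> x \<Longrightarrow> 0 \<le> y \<Longrightarrow> P x y \<longleftrightarrow> t y \<le> x"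
    and t_nonneg: "\<And>y. 0 \<le> y \<Longrightarrow> 0 \<le> t y"
  shows "emeasure M {\<omega> \<in> space M. P (X \<omega>) (Y \<omega>)}
       = (\<integral>\<^sup>+y. ennreal (g y * erlang_survival k l (t y)) \<partial>lborel)"
proof -
  have "{\<omega> \<in> space M. P (X \<omega>) (Y \<omega>)} = (\<lambda>\<omega>. (X \<omega>, Y \<omega>)) -` {(x, y). P x y} \<inter> space M"
    by auto
  also have "emeasure M \<dots> = (\<integral>\<^sup>+y. \<integral>\<^sup>+x. ennreal (erlang_density k l x) * ennreal (g y)
      * indicator {(x, y). P x y} (x, y) \<partial>lborel \<partial>lborel)"
    by (rule emeasure_indep_pair_density[OF X Y ind P])
  also have "\<dots> = (\<integral>\<^sup>+y. ennreal (g y * erlang_survival k l (t y)) \<partial>lborel)"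
  proof (rule nn_integral_cong)
    fix y :: real
    show "(\<integral>\<^sup>+x. ennreal (erlang_density k l x) * ennreal (g y) * indicator {(x, y). P x y} (x, y) \<partial>lborel)
        = ennreal (g y * erlang_survival k l (t y))"
    proof (cases "y < 0")
      case True
      then show ?thesis by (simp add: g_neg)
    next
      case False
      have "(\<integral>\<^sup>+x. ennreal (erlang_density k l x) * ennreal (g y) * indicator {(x, y). P x y} (x, y) \<partial>lborel)
          = (\<integral>\<^sup>+x. ennreal (g y) * (ennreal (erlang_density k l x) * indicator {t y..} x) \<partial>lborel)"
      proof (rule nn_integral_cong)
        fix x :: real
        show "ennreal (erlang_density k l x) * ennreal (g y) * indicator {(x, y). P x y} (x, y)
            = ennreal (g y) * (ennreal (erlang_density k l x) * indicator {t y..} x)"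
          using threshold[of x y] False by (cases "x < 0") (auto simp: erlang_density_def mult.commute split: split_indicator)
      qed
      also have "\<dots> = ennreal (g y) * erlang_survival k l (t y)"
        using False l t_nonneg by (simp add: nn_integral_cmult nn_integral_erlang_density_atLeast)
      also have "\<dots> = ennreal (g y * erlang_survival k l (t y))"
        using False l t_nonneg by (simp add: ennreal_mult'' erlang_survival_nonneg)
      finally show ?thesis .
    qed
  qed
  finally show ?thesis .
qed

section \<open>Per-hop success probabilities\<close>

lemma ennreal_sum_sum:
  "(\<And>m k. 0 \<le> F m k) \<Longrightarrow> ennreal (\<Sum>m\<in>A. \<Sum>k\<in>B m. F m k) = (\<Sum>m\<in>A. \<Sum>k\<in>B m. ennreal (F m k))"
  by (simp add: sum_nonneg sum_ennreal)

lemma erlang_survival_affine_binomial: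
  "erlang_survival k 1 (b * y + c)
    = (\<Sum>m\<le>k. \<Sum>i\<le>m. real (m choose i) * b ^ i * c ^ (m - i) * exp (- c) / fact m * (exp (- b * y) * y ^ i))"
proof -
  have "exp (- (b * y + c)) = exp (- c) * exp (- b * y)"
    by (simp add: exp_add[symmetric])
  then have "erlang_survival k 1 (b * y + c) = (\<Sum>m\<le>k. exp (- c) * exp (- b * y) * (b * y + c) ^ m / fact m)"
    by (simp add: erlang_survival_def sum_distrib_left)
  also have "\<dots> = (\<Sum>m\<le>k. \<Sum>i\<le>m. real (m choose i) * b ^ i * c ^ (m - i) * exp (- c) / fact m * (exp (- b * y) * y ^ i))"
    unfolding binomial_ring sum_distrib_left sum_divide_distrib
    by (intro sum.cong refl) (simp add: power_mult_distrib field_simps)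
  finally show ?thesis .
qed

lemma nn_integral_erlang_density_erlang_survival_affine:
  assumes \<mu>: "0 < \<mu>" and b: "0 \<le> b" and c: "0 \<le> c"
  shows "(\<integral>\<^sup>+y. ennreal (erlang_density j \<mu> y * erlang_survival k 1 (b * y + c)) \<partial>lborel)
    = ennreal (exp (- c) * \<mu> ^ Suc j / fact j * (\<Sum>m\<le>k. \<Sum>i\<le>m.
        real (m choose i) * b ^ i * c ^ (m - i) * fact (j + i) / (fact m * (\<mu> + b) ^ (Suc j + i))))"
proof -
  define coef where "coef m i = real (m choose i) * b ^ i * c ^ (m - i) * exp (- c) / fact m" for m i
  define h where "h i y = erlang_density j \<mu> y * exp (- b * y) * y ^ i" for i y
  define moment where "moment i = \<mu> ^ Suc j * fact (j + i) / (fact j * (\<mu> + b) ^ (Suc j + i))" for i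
  have coef_nonneg: "0 \<le> coef m i" for m i
    unfolding coef_def using b c by simp
  have h_nonneg: "0 \<le> h i y" for i y
    unfolding h_def using \<mu> by (cases "y < 0") (auto simp: erlang_density_def)
  have moment_nonneg: "0 \<le> moment i" for i
    unfolding moment_def using \<mu> b by simp
  have expand: "erlang_density j \<mu> y * erlang_survival k 1 (b * y + c) = (\<Sum>m\<le>k. \<Sum>i\<le>m. coef m i * h i y)" for y
    unfolding erlang_survival_affine_binomial sum_distrib_left coef_def h_def by (simp add: mult_ac)
  have "(\<integral>\<^sup>+y. ennreal (erlang_density j \<mu> y * erlang_survival k 1 (b * y + c)) \<partial>lborel)
      = (\<integral>\<^sup>+y. (\<Sum>m\<le>k. \<Sum>i\<le>m. ennreal (coef m i) * ennreal (h i y)) \<partial>lborel)"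
    unfolding expand using coef_nonneg h_nonneg by (simp add: ennreal_sum_sum ennreal_mult)
  also have "\<dots> = (\<Sum>m\<le>k. \<Sum>i\<le>m. ennreal (coef m i) * (\<integral>\<^sup>+y. ennreal (h i y) \<partial>lborel))"
    by (subst nn_integral_sum, (unfold h_def, measurable)[1],
        subst nn_integral_sum, (unfold h_def, measurable)[1],
        subst nn_integral_cmult, (unfold h_def, measurable)[1], rule refl)
  also have "\<dots> = (\<Sum>m\<le>k. \<Sum>i\<le>m. ennreal (coef m i) * ennreal (moment i))"
    unfolding h_def moment_def using nn_integral_erlang_density_exp_power[OF \<mu> b] by simp
  also have "\<dots> = ennreal (\<Sum>m\<le>k. \<Sum>i\<le>m. coef m i * moment i)"
    using coef_nonneg moment_nonneg by (simp add: ennreal_sum_sum ennreal_mult)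
  also have "(\<Sum>m\<le>k. \<Sum>i\<le>m. coef m i * moment i) = exp (- c) * \<mu> ^ Suc j / fact j * (\<Sum>m\<le>k. \<Sum>i\<le>m.
      real (m choose i) * b ^ i * c ^ (m - i) * fact (j + i) / (fact m * (\<mu> + b) ^ (Suc j + i)))"
    unfolding sum_distrib_left by (intro sum.cong refl) (simp add: coef_def moment_def mult_ac)
  finally show ?thesis .
qed

lemma (in prob_space) emeasure_R_sr_ge:
  assumes Ps: "0 < Ps" and Pr: "0 < Pr" and r: "0 < r" and C: "0 \<le> C" "C \<le> 1"
    and m: "1 \<le> msr" and \<theta>: "0 < \<theta>sr"
    and ind: "indep_var lborel gsr lborel grr"
    and Dsr: "distributed M lborel gsr (\<lambda>x. ennreal (gamma_density msr \<theta>sr x))"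
    and Drr: "distributed M lborel grr (\<lambda>y. ennreal (gamma_density mrr \<theta>rr y))"
  shows "emeasure M {\<omega> \<in> space M. r \<le> R_sr Ps Pr C (gsr \<omega>) (grr \<omega>)}
    = (\<integral>\<^sup>+y. ennreal (gamma_density mrr \<theta>rr y
          * erlang_survival (msr - 1) (1 / \<theta>sr) (sr_threshold Ps Pr C r y)) \<partial>lborel)"
proof (rule emeasure_erlang_ge_threshold[OF ind])
  show "distributed M lborel gsr (\<lambda>x. ennreal (erlang_density (msr - 1) (1 / \<theta>sr) x))"
    using Dsr by (simp add: gamma_density_eq_erlang_density[OF m \<theta>])
  show "{(x, y). r \<le> R_sr Ps Pr C x y} \<in> sets (lborel \<Otimes>\<^sub>M lborel)"
    by (rule sets_pair_lborel_le) measurable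
qed (use Drr \<theta> sr_threshold_nonneg[OF Ps Pr r C] R_sr_ge_iff[OF Ps Pr r C] in
      \<open>auto simp: gamma_density_def\<close>)

lemma (in prob_space) emeasure_R_rd_ge:
  assumes Ps: "0 < Ps" and Pr: "0 < Pr" and r: "0 < r" and C: "0 \<le> C" "C < 1"
    and m: "1 \<le> mrd" and \<theta>: "0 < \<theta>rd"
    and ind: "indep_var lborel grd lborel gsd"
    and Drd: "distributed M lborel grd (\<lambda>x. ennreal (gamma_density mrd \<theta>rd x))"
    and Dsd: "distributed M lborel gsd (\<lambda>y. ennreal (gamma_density msd \<theta>sd y))"
  shows "emeasure M {\<omega> \<in> space M. r \<le> R_rd Ps Pr C (grd \<omega>) (gsd \<omega>)}
    = (\<integral>\<^sup>+y. ennreal (gamma_density msd \<theta>sd y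
          * erlang_survival (mrd - 1) (1 / \<theta>rd) (rd_threshold Ps Pr C r y)) \<partial>lborel)"
proof (rule emeasure_erlang_ge_threshold[OF ind])
  show "distributed M lborel grd (\<lambda>x. ennreal (erlang_density (mrd - 1) (1 / \<theta>rd) x))"
    using Drd by (simp add: gamma_density_eq_erlang_density[OF m \<theta>])
  show "{(x, y). r \<le> R_rd Ps Pr C x y} \<in> sets (lborel \<Otimes>\<^sub>M lborel)"
    by (rule sets_pair_lborel_le) measurable
qed (use Dsd \<theta> Ps Pr r C rd_threshold_nonneg[of Ps Pr r C] R_rd_ge_iff[OF Ps Pr r C] in
      \<open>auto simp: gamma_density_def\<close>)

lemma (in prob_space) prob_R_sr_ge:
  assumes Ps: "0 < Ps" and Pr: "0 < Pr" and r: "0 < r" and C: "0 \<le> C" "C \<le> 1"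
    and m: "1 \<le> msr" "1 \<le> mrr" and \<theta>: "0 < \<theta>sr" "0 < \<theta>rr"
    and ind: "indep_var lborel gsr lborel grr"
    and Dsr: "distributed M lborel gsr (\<lambda>x. ennreal (gamma_density msr \<theta>sr x))"
    and Drr: "distributed M lborel grr (\<lambda>x. ennreal (gamma_density mrr \<theta>rr x))"
  shows "prob {\<omega> \<in> space M. r \<le> R_sr Ps Pr C (gsr \<omega>) (grr \<omega>)}
    = (LBINT x:{0..}. x ^ (mrr - 1)
         * upper_inc_gamma msr ((Pr * x + 1) / (Ps * \<theta>sr) * Psi r (Pr * x * C / (Pr * x + 1)))
         * exp (- x / \<theta>rr))
      / (Gamma (real mrr) * Gamma (real msr) * \<theta>rr ^ mrr)"
proof -
  define F where "F y = gamma_density mrr \<theta>rr y * erlang_survival (msr - 1) (1 / \<theta>sr) (sr_threshold Ps Pr C r y)"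
    for y
  define K where "K = Gamma (real mrr) * Gamma (real msr) * \<theta>rr ^ mrr"
  note t_nonneg = sr_threshold_nonneg[OF Ps Pr r C]
  have F_nonneg: "0 \<le> F y" for y
    unfolding F_def using t_nonneg \<theta> m
    by (cases "y < 0") (simp_all add: gamma_density_def gamma_density_nonneg erlang_survival_nonneg)
  have "F \<in> borel_measurable lborel"
    unfolding F_def sr_threshold_def gamma_density_def erlang_survival_def Psi_def by measurable
  then have prob_F: "prob {\<omega> \<in> space M. r \<le> R_sr Ps Pr C (gsr \<omega>) (grr \<omega>)} = (LINT y|lborel. F y)"
    using emeasure_R_sr_ge[OF Ps Pr r C m(1) \<theta>(1) ind Dsr Drr] F_nonneg unfolding F_def[symmetric]
    by (simp add: measure_def integral_eq_nn_integral)
  have integrand: "indicator {0..} x *\<^sub>R (x ^ (mrr - 1)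
         * upper_inc_gamma msr ((Pr * x + 1) / (Ps * \<theta>sr) * Psi r (Pr * x * C / (Pr * x + 1)))
         * exp (- x / \<theta>rr)) = K * F x" for x
  proof (cases "x < 0")
    case False
    have arg: "(Pr * x + 1) / (Ps * \<theta>sr) * Psi r (Pr * x * C / (Pr * x + 1)) = 1 / \<theta>sr * sr_threshold Ps Pr C r x"
      by (simp add: sr_threshold_def)
    have "upper_inc_gamma msr (1 / \<theta>sr * sr_threshold Ps Pr C r x)
        = fact (msr - 1) * erlang_survival (msr - 1) 1 (1 / \<theta>sr * sr_threshold Ps Pr C r x)"
      by (rule upper_inc_gamma_eq_erlang_survival) (use t_nonneg[of x] False \<theta> in simp)
    then have "upper_inc_gamma msr ((Pr * x + 1) / (Ps * \<theta>sr) * Psi r (Pr * x * C / (Pr * x + 1)))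
        = Gamma (real msr) * erlang_survival (msr - 1) (1 / \<theta>sr) (sr_threshold Ps Pr C r x)"
      by (simp only: arg Gamma_of_nat_eq_fact[OF m(1)] erlang_survival_rate[of _ "1 / \<theta>sr"])
    moreover have "Gamma (real mrr) > 0" using m by (simp add: Gamma_of_nat_eq_fact)
    ultimately show ?thesis
      using False \<theta> by (simp add: F_def K_def gamma_density_def)
  qed (simp add: F_def gamma_density_def)
  have "(LBINT x:{0..}. x ^ (mrr - 1)
         * upper_inc_gamma msr ((Pr * x + 1) / (Ps * \<theta>sr) * Psi r (Pr * x * C / (Pr * x + 1)))
         * exp (- x / \<theta>rr)) = K * (LINT y|lborel. F y)"
    unfolding set_lebesgue_integral_def integrand by simp
  moreover have "K \<noteq> 0" unfolding K_def using m \<theta> by (simp add: Gamma_of_nat_eq_fact)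
  ultimately show ?thesis
    unfolding prob_F K_def[symmetric] by simp
qed

lemma (in prob_space) prob_R_rd_ge:
  assumes Ps: "0 < Ps" and Pr: "0 < Pr" and r: "0 < r" and C: "0 \<le> C" "C < 1"
    and m: "1 \<le> mrd" "1 \<le> msd" and \<theta>: "0 < \<theta>rd" "0 < \<theta>sd"
    and ind: "indep_var lborel grd lborel gsd"
    and Drd: "distributed M lborel grd (\<lambda>x. ennreal (gamma_density mrd \<theta>rd x))"
    and Dsd: "distributed M lborel gsd (\<lambda>x. ennreal (gamma_density msd \<theta>sd x))"
  defines "\<beta> \<equiv> Psi r C / (Pr * \<theta>rd * (1 - C\<^sup>2))"
  shows "prob {\<omega> \<in> space M. r \<le> R_rd Ps Pr C (grd \<omega>) (gsd \<omega>)}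
    = exp (- \<beta>) / (Gamma (real msd) * \<theta>sd ^ msd)
      * (\<Sum>m = 0..mrd - 1. \<Sum>k = 0..m. real (m choose k) * Ps ^ k * Gamma (real (k + msd)) * \<beta> ^ m
           / (Gamma (real m + 1) * (Ps * \<beta> + 1 / \<theta>sd) ^ (k + msd)))"
proof -
  have \<beta>: "0 \<le> \<beta>"
    unfolding \<beta>_def using Psi_nonneg[OF r, of C] C Pr \<theta> by (simp add: abs_square_le_1)
  have rate: "1 / \<theta>rd * rd_threshold Ps Pr C r y = Ps * \<beta> * y + \<beta>" for y
  proof -
    have "1 / \<theta>rd * rd_threshold Ps Pr C r y = (Ps * y + 1) * \<beta>"
      by (simp add: rd_threshold_def \<beta>_def ac_simps)
    then show ?thesis by (simp add: algebra_simps)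
  qed
  have "emeasure M {\<omega> \<in> space M. r \<le> R_rd Ps Pr C (grd \<omega>) (gsd \<omega>)}
      = (\<integral>\<^sup>+y. ennreal (erlang_density (msd - 1) (1 / \<theta>sd) y
          * erlang_survival (mrd - 1) 1 (Ps * \<beta> * y + \<beta>)) \<partial>lborel)"
    unfolding emeasure_R_rd_ge[OF Ps Pr r C m(1) \<theta>(1) ind Drd Dsd]
    by (simp only: gamma_density_eq_erlang_density[OF m(2) \<theta>(2)] erlang_survival_rate[of _ "1 / \<theta>rd"] rate)
  also have "\<dots> = ennreal (exp (- \<beta>) * (1 / \<theta>sd) ^ msd / fact (msd - 1) * (\<Sum>m\<le>mrd - 1. \<Sum>i\<le>m.
      real (m choose i) * (Ps * \<beta>) ^ i * \<beta> ^ (m - i) * fact (msd - 1 + i) / (fact m * (1 / \<theta>sd + Ps * \<beta>) ^ (msd + i))))"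
    using nn_integral_erlang_density_erlang_survival_affine[of "1 / \<theta>sd" "Ps * \<beta>" \<beta> "msd - 1" "mrd - 1"] \<theta> Ps \<beta> m
    by simp
  finally have "prob {\<omega> \<in> space M. r \<le> R_rd Ps Pr C (grd \<omega>) (gsd \<omega>)}
      = exp (- \<beta>) * (1 / \<theta>sd) ^ msd / fact (msd - 1) * (\<Sum>m\<le>mrd - 1. \<Sum>i\<le>m.
      real (m choose i) * (Ps * \<beta>) ^ i * \<beta> ^ (m - i) * fact (msd - 1 + i) / (fact m * (1 / \<theta>sd + Ps * \<beta>) ^ (msd + i)))"
    using Ps \<beta> \<theta> by (simp add: measure_def sum_nonneg)
  also have "exp (- \<beta>) * (1 / \<theta>sd) ^ msd / fact (msd - 1) = exp (- \<beta>) / (Gamma (real msd) * \<theta>sd ^ msd)"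
    using m by (simp add: Gamma_of_nat_eq_fact power_one_over)
  also have "(\<Sum>m\<le>mrd - 1. \<Sum>i\<le>m.
      real (m choose i) * (Ps * \<beta>) ^ i * \<beta> ^ (m - i) * fact (msd - 1 + i) / (fact m * (1 / \<theta>sd + Ps * \<beta>) ^ (msd + i)))
    = (\<Sum>m = 0..mrd - 1. \<Sum>k = 0..m. real (m choose k) * Ps ^ k * Gamma (real (k + msd)) * \<beta> ^ m
           / (Gamma (real m + 1) * (Ps * \<beta> + 1 / \<theta>sd) ^ (k + msd)))"
    unfolding atLeast0AtMost
  proof (intro sum.cong refl)
    fix m i :: nat assume "i \<in> {..m}"
    then have "\<beta> ^ m = \<beta> ^ i * \<beta> ^ (m - i)" by (simp flip: power_add)
    moreover have "Gamma (real (i + msd)) = fact (msd - 1 + i)"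
      using Gamma_of_nat_eq_fact[of "i + msd"] m by (simp add: add.commute)
    moreover have "Gamma (real m + 1) = fact m"
      using Gamma_fact[of m] by (simp add: add.commute)
    ultimately show "real (m choose i) * (Ps * \<beta>) ^ i * \<beta> ^ (m - i) * fact (msd - 1 + i) / (fact m * (1 / \<theta>sd + Ps * \<beta>) ^ (msd + i))
      = real (m choose i) * Ps ^ i * Gamma (real (i + msd)) * \<beta> ^ m / (Gamma (real m + 1) * (Ps * \<beta> + 1 / \<theta>sd) ^ (i + msd))"
      by (simp add: power_mult_distrib ac_simps)
  qed
  finally show ?thesis .
qed

theorem theorem2:
  fixes M :: "'a measure"
    and gsr grr grd gsd :: "'a \<Rightarrow> real"
    and Ps Pr C r :: real
    and msr mrr mrd msd :: nat
    and \<pi>sr \<pi>rr \<pi>rd \<pi>sd \<theta>sr \<theta>rr \<theta>rd \<theta>sd :: real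
  assumes "prob_space M"
    and "Ps > 0" and "Pr > 0" and "r > 0" and "0 \<le> C" and "C < 1"
    and "msr \<ge> 1" and "mrr \<ge> 1" and "mrd \<ge> 1" and "msd \<ge> 1"
    and "\<pi>sr > 0" and "\<pi>rr > 0" and "\<pi>rd > 0" and "\<pi>sd > 0"
    and "\<theta>sr = \<pi>sr / real msr" and "\<theta>rr = \<pi>rr / real mrr"
    and "\<theta>rd = \<pi>rd / real mrd" and "\<theta>sd = \<pi>sd / real msd"
    and "prob_space.indep_vars M (\<lambda>_. borel) (\<lambda>i. [gsr, grr, grd, gsd] ! i) {0..<4}"
    and "distributed M lborel gsr (\<lambda>x. ennreal (gamma_density msr \<theta>sr x))"
    and "distributed M lborel grr (\<lambda>x. ennreal (gamma_density mrr \<theta>rr x))"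
    and "distributed M lborel grd (\<lambda>x. ennreal (gamma_density mrd \<theta>rd x))"
    and "distributed M lborel gsd (\<lambda>x. ennreal (gamma_density msd \<theta>sd x))"
  shows "let \<beta> = Psi r C / (Pr * \<theta>rd * (1 - C\<^sup>2)) in
    measure M {\<omega> \<in> space M.
        min (R_sr Ps Pr C (gsr \<omega>) (grr \<omega>)) (R_rd Ps Pr C (grd \<omega>) (gsd \<omega>)) < r}
    = 1 - exp (- \<beta>) /
          (Gamma (real msd) * Gamma (real mrr) * Gamma (real msr) * \<theta>sd ^ msd * \<theta>rr ^ mrr)
        * (\<Sum>m = 0..mrd - 1. \<Sum>k = 0..m.
             real (m choose k) * Ps ^ k * Gamma (real (k + msd)) * \<beta> ^ m
             / (Gamma (real m + 1) * (Ps * \<beta> + 1 / \<theta>sd) ^ (k + msd))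
           * (LBINT x:{0..}. x ^ (mrr - 1)
                * upper_inc_gamma msr ((Pr * x + 1) / (Ps * \<theta>sr) * Psi r (Pr * x * C / (Pr * x + 1)))
                * exp (- x / \<theta>rr)))"
proof -
  interpret prob_space M by fact
  have \<theta>: "0 < \<theta>sr" "0 < \<theta>rr" "0 < \<theta>rd" "0 < \<theta>sd"
    using assms by simp_all
  note ind = indep_vars_list4[OF assms(19)]
  define \<beta> where "\<beta> = Psi r C / (Pr * \<theta>rd * (1 - C\<^sup>2))"
  define I where "I = (LBINT x:{0..}. x ^ (mrr - 1)
    * upper_inc_gamma msr ((Pr * x + 1) / (Ps * \<theta>sr) * Psi r (Pr * x * C / (Pr * x + 1)))
    * exp (- x / \<theta>rr))"
  define a where "a m k = real (m choose k) * Ps ^ k * Gamma (real (k + msd)) * \<beta> ^ m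
    / (Gamma (real m + 1) * (Ps * \<beta> + 1 / \<theta>sd) ^ (k + msd))" for m k
  have "measure M {\<omega> \<in> space M. min (R_sr Ps Pr C (gsr \<omega>) (grr \<omega>)) (R_rd Ps Pr C (grd \<omega>) (gsd \<omega>)) < r}
      = 1 - prob {\<omega> \<in> space M. r \<le> R_sr Ps Pr C (gsr \<omega>) (grr \<omega>)}
          * prob {\<omega> \<in> space M. r \<le> R_rd Ps Pr C (grd \<omega>) (gsd \<omega>)}"
    using prob_min_lt_indep[OF ind(1) borel_measurable_R_sr borel_measurable_R_rd] by simp
  also have "\<dots> = 1 - I / (Gamma (real mrr) * Gamma (real msr) * \<theta>rr ^ mrr)
      * (exp (- \<beta>) / (Gamma (real msd) * \<theta>sd ^ msd) * (\<Sum>m = 0..mrd - 1. \<Sum>k = 0..m. a m k))"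
    unfolding I_def a_def \<beta>_def
    using prob_R_sr_ge[OF assms(2-5) less_imp_le[OF assms(6)] assms(7,8) \<theta>(1,2) ind(2) assms(20,21)]
      prob_R_rd_ge[OF assms(2-6,9,10) \<theta>(3,4) ind(3) assms(22,23)]
    by simp
  also have "\<dots> = 1 - exp (- \<beta>)
      / (Gamma (real msd) * Gamma (real mrr) * Gamma (real msr) * \<theta>sd ^ msd * \<theta>rr ^ mrr)
      * (\<Sum>m = 0..mrd - 1. \<Sum>k = 0..m. a m k * I)"
    unfolding sum_distrib_right[symmetric] by (simp add: mult_ac)
  finally show ?thesis
    unfolding Let_def \<beta>_def[symmetric] I_def[symmetric] a_def .
qed

end
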